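(* Let $1\le\nu<\infty$, let $\phi(z)=az+b$ with $|a|=1$, $b\in\mathbb{C}$, and let $w$ be an entire function such that $W_{w,\phi}$ is bounded on $\mathcal{F}^\nu$. Then $W_{w,\phi}$ is power-bounded on $\mathcal{F}^\nu$ if and only if $|w(0)|\le e^{-|b|^2/2}$.
   Context: For $1\le\nu<\infty$, $\mathcal{F}^\nu$ is the space of entire functions $f$ with $\|f\|_\nu:=\left(\frac{\nu}{2\pi}\int_{\mathbb{C}}|f(z)|^\nu e^{-\nu|z|^2/2}\,dm(z)\right)^{1/\nu}<\infty$. $W_{w,\phi}f=w\,(f\circ\phi)$. An operator $T$ is power-bounded if $\sup_{n\ge1}\|T^n\|<\infty$. (For $|a|=1$ and $w\not\equiv0$, boundedness of $W_{w,\phi}$ on $\mathcal{F}^\nu$ forces $w(z)=w(0)e^{-\overline{b}az}$.) *)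

theory Defs
  imports "HOL-Analysis.Analysis"
begin

definition wcomp :: "(complex \<Rightarrow> complex) \<Rightarrow> (complex \<Rightarrow> complex) \<Rightarrow> (complex \<Rightarrow> complex) \<Rightarrow> (complex \<Rightarrow> complex)"
  where "wcomp w \<phi> f = (\<lambda>z. w z * f (\<phi> z))"

definition fock_integral :: "real \<Rightarrow> (complex \<Rightarrow> complex) \<Rightarrow> ennreal"
  where "fock_integral \<nu> f =
    (\<integral>\<^sup>+ z. ennreal (cmod (f z) powr \<nu> * exp (- \<nu> * (cmod z)\<^sup>2 / 2)) \<partial>lborel)"

definition fock_space :: "real \<Rightarrow> (complex \<Rightarrow> complex) set"
  where "fock_space \<nu> = {f. f holomorphic_on UNIV \<and> fock_integral \<nu> f < \<infinity>}"

definition fock_norm :: "real \<Rightarrow> (complex \<Rightarrow> complex) \<Rightarrow> real"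
  where "fock_norm \<nu> f = (\<nu> / (2 * pi) * enn2real (fock_integral \<nu> f)) powr (1 / \<nu>)"

definition bounded_on_fock :: "real \<Rightarrow> ((complex \<Rightarrow> complex) \<Rightarrow> (complex \<Rightarrow> complex)) \<Rightarrow> bool"
  where "bounded_on_fock \<nu> T \<longleftrightarrow>
    (\<forall>f \<in> fock_space \<nu>. T f \<in> fock_space \<nu>) \<and>
    (\<exists>C. \<forall>f \<in> fock_space \<nu>. fock_norm \<nu> (T f) \<le> C * fock_norm \<nu> f)"

definition power_bounded_on_fock :: "real \<Rightarrow> ((complex \<Rightarrow> complex) \<Rightarrow> (complex \<Rightarrow> complex)) \<Rightarrow> bool"
  where "power_bounded_on_fock \<nu> T \<longleftrightarrow>
    (\<exists>C. \<forall>n \<ge> 1. \<forall>f \<in> fock_space \<nu>. fock_norm \<nu> ((T ^^ n) f) \<le> C * fock_norm \<nu> f)"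

end

theory Submission
  imports Defs "HOL-Probability.Distributions" "HOL-Complex_Analysis.Cauchy_Integral_Formula"
begin

text \<open>
  Put h(u) = w(cnj a (u - b)) exp(cnj b u - |b|^2/2), i.e. h = wcomp_affine_multiplier w a b.
  The substitution u = a z + b preserves Lebesgue measure on the plane because |a| = 1, and it
  turns the Fock integral of W F into that of h F; so on norms W acts as multiplication by h.
  Boundedness of W then gives ||h^n|| <= M^n ||1||, and this forces |h| <= M everywhere, for on
  a ball where |h| >= m > M the norm ||h^n|| would grow like m^n. By Liouville h is the constant
  h(b) = w(0) e^(|b|^2/2), so W is |w(0)| e^(|b|^2/2) times an isometry, and it is
  power-bounded exactly when this factor is at most 1.
\<close>

section \<open>Lebesgue measure on the complex plane\<close>

lemma borel_measurable_Complex [measurable]: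
  assumes [measurable]: "f \<in> borel_measurable M" "g \<in> borel_measurable M"
  shows "(\<lambda>x. Complex (f x) (g x)) \<in> borel_measurable M"
  unfolding Complex_eq by measurable

lemma lborel_complex_eq_distr_pair:
  "(lborel :: complex measure) = distr (lborel \<Otimes>\<^sub>M lborel) borel (\<lambda>(x, y). Complex x y)"
proof (rule lborel_eqI)
  fix l u :: complex
  assume le: "\<And>i. i \<in> Basis \<Longrightarrow> l \<bullet> i \<le> u \<bullet> i"
  have [measurable]: "(\<lambda>(x, y). Complex x y) \<in> borel_measurable (lborel \<Otimes>\<^sub>M lborel)"
    by measurable
  have "(\<lambda>(x, y). Complex x y) -` box l u \<inter> space (lborel \<Otimes>\<^sub>M lborel)
      = box (Re l) (Re u) \<times> box (Im l) (Im u)"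
    by (auto simp: box_def Basis_complex_def space_pair_measure)
  then have "emeasure (distr (lborel \<Otimes>\<^sub>M lborel) borel (\<lambda>(x, y). Complex x y)) (box l u)
      = emeasure lborel (box (Re l) (Re u)) * emeasure lborel (box (Im l) (Im u))"
    by (simp add: emeasure_distr lborel.emeasure_pair_measure_Times)
  also have "\<dots> = (\<Prod>i\<in>Basis. (u - l) \<bullet> i)"
    using le[of 1] le[of \<i>] by (simp add: Basis_complex_def ennreal_mult' inner_complex_def)
  finally show "emeasure (distr (lborel \<Otimes>\<^sub>M lborel) borel (\<lambda>(x, y). Complex x y)) (box l u)
      = (\<Prod>i\<in>Basis. (u - l) \<bullet> i)" .
qed simp

lemma nn_integral_lborel_complex:
  fixes G :: "complex \<Rightarrow> ennreal"
  assumes [measurable]: "G \<in> borel_measurable borel"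
  shows "(\<integral>\<^sup>+z. G z \<partial>lborel) = (\<integral>\<^sup>+y. \<integral>\<^sup>+x. G (Complex x y) \<partial>lborel \<partial>lborel)"
    and "(\<integral>\<^sup>+z. G z \<partial>lborel) = (\<integral>\<^sup>+x. \<integral>\<^sup>+y. G (Complex x y) \<partial>lborel \<partial>lborel)"
proof -
  have [measurable]: "(\<lambda>(x, y). Complex x y) \<in> borel_measurable (lborel \<Otimes>\<^sub>M lborel)"
    by measurable
  have pair: "(\<integral>\<^sup>+z. G z \<partial>lborel) = (\<integral>\<^sup>+p. G (Complex (fst p) (snd p)) \<partial>(lborel \<Otimes>\<^sub>M lborel))"
    by (subst lborel_complex_eq_distr_pair) (simp add: nn_integral_distr case_prod_unfold)
  show "(\<integral>\<^sup>+z. G z \<partial>lborel) = (\<integral>\<^sup>+y. \<integral>\<^sup>+x. G (Complex x y) \<partial>lborel \<partial>lborel)"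
    unfolding pair by (subst lborel_pair.nn_integral_snd[symmetric]) auto
  show "(\<integral>\<^sup>+z. G z \<partial>lborel) = (\<integral>\<^sup>+x. \<integral>\<^sup>+y. G (Complex x y) \<partial>lborel \<partial>lborel)"
    unfolding pair by (subst lborel.nn_integral_fst[symmetric]) auto
qed

lemma nn_integral_lborel_translate:
  fixes f :: "real \<Rightarrow> ennreal"
  assumes "f \<in> borel_measurable borel"
  shows "(\<integral>\<^sup>+x. f (x + s) \<partial>lborel) = (\<integral>\<^sup>+x. f x \<partial>lborel)"
  using nn_integral_real_affine[OF assms, of 1 s] by (simp add: add.commute)

lemma nn_integral_lborel_complex_shear_Re:
  fixes G :: "complex \<Rightarrow> ennreal"
  assumes [measurable]: "G \<in> borel_measurable borel"
  shows "(\<integral>\<^sup>+z. G (z + of_real (t * Im z)) \<partial>lborel) = (\<integral>\<^sup>+z. G z \<partial>lborel)"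
proof -
  have "(\<integral>\<^sup>+z. G (z + of_real (t * Im z)) \<partial>lborel)
      = (\<integral>\<^sup>+y. \<integral>\<^sup>+x. G (Complex (x + t * y) y) \<partial>lborel \<partial>lborel)"
    by (subst nn_integral_lborel_complex(1), measurable)
       (intro nn_integral_cong arg_cong[where f = G], simp add: complex_eq_iff)
  also have "\<dots> = (\<integral>\<^sup>+y. \<integral>\<^sup>+x. G (Complex x y) \<partial>lborel \<partial>lborel)"
    by (rule nn_integral_cong, rule nn_integral_lborel_translate) measurable
  also have "\<dots> = (\<integral>\<^sup>+z. G z \<partial>lborel)"
    by (simp add: nn_integral_lborel_complex(1))
  finally show ?thesis .
qed

lemma nn_integral_lborel_complex_shear_Im:
  fixes G :: "complex \<Rightarrow> ennreal"
  assumes [measurable]: "G \<in> borel_measurable borel"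
  shows "(\<integral>\<^sup>+z. G (z + \<i> * of_real (t * Re z)) \<partial>lborel) = (\<integral>\<^sup>+z. G z \<partial>lborel)"
proof -
  have "(\<integral>\<^sup>+z. G (z + \<i> * of_real (t * Re z)) \<partial>lborel)
      = (\<integral>\<^sup>+x. \<integral>\<^sup>+y. G (Complex x (y + t * x)) \<partial>lborel \<partial>lborel)"
    by (subst nn_integral_lborel_complex(2), measurable)
       (intro nn_integral_cong arg_cong[where f = G], simp add: complex_eq_iff)
  also have "\<dots> = (\<integral>\<^sup>+x. \<integral>\<^sup>+y. G (Complex x y) \<partial>lborel \<partial>lborel)"
    by (rule nn_integral_cong, rule nn_integral_lborel_translate) measurable
  also have "\<dots> = (\<integral>\<^sup>+z. G z \<partial>lborel)"
    by (simp add: nn_integral_lborel_complex(2))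
  finally show ?thesis .
qed

text \<open>A rotation is a product of three shears, each of which preserves Lebesgue measure by
  Fubini's theorem; the shear parameter is undefined for c = -1.\<close>

lemma nn_integral_lborel_complex_rotate_by_shears:
  fixes G :: "complex \<Rightarrow> ennreal"
  assumes [measurable]: "G \<in> borel_measurable borel" and "cmod c = 1" and "c \<noteq> -1"
  shows "(\<integral>\<^sup>+z. G (c * z) \<partial>lborel) = (\<integral>\<^sup>+z. G z \<partial>lborel)"
proof -
  define t where "t = - Im c / (1 + Re c)"
  define S1 where "S1 z = z + of_real (t * Im z)" for z
  define S2 where "S2 z = z + \<i> * of_real (Im c * Re z)" for z
  have [measurable]: "S1 \<in> borel_measurable borel" "S2 \<in> borel_measurable borel"
    unfolding S1_def[abs_def] S2_def[abs_def] by measurable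
  have Im_sq: "(Im c)\<^sup>2 = (1 - Re c) * (1 + Re c)"
    using assms(2) by (simp add: cmod_def algebra_simps power2_eq_square)
  with assms(3) have "1 + Re c \<noteq> 0"
    by (auto simp: complex_eq_iff)
  with Im_sq have tc: "t * Im c = Re c - 1"
    unfolding t_def by (simp add: field_simps power2_eq_square)
  with \<open>1 + Re c \<noteq> 0\<close> have tc2: "t * (2 + t * Im c) = - Im c"
    by (simp add: t_def)
  have shears: "c * z = S1 (S2 (S1 z))" for z
  proof -
    have "S1 (S2 (S1 z)) = Complex ((1 + t * Im c) * Re z + t * (2 + t * Im c) * Im z)
        (Im c * Re z + (1 + t * Im c) * Im z)"
      by (simp add: S1_def S2_def complex_eq_iff algebra_simps)
    with tc tc2 show ?thesis
      by (simp add: complex_eq_iff)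
  qed
  have S1_shear: "(\<integral>\<^sup>+z. F (S1 z) \<partial>lborel) = (\<integral>\<^sup>+z. F z \<partial>lborel)"
    if "F \<in> borel_measurable borel" for F
    unfolding S1_def using that by (rule nn_integral_lborel_complex_shear_Re)
  have S2_shear: "(\<integral>\<^sup>+z. F (S2 z) \<partial>lborel) = (\<integral>\<^sup>+z. F z \<partial>lborel)"
    if "F \<in> borel_measurable borel" for F
    unfolding S2_def using that by (rule nn_integral_lborel_complex_shear_Im)
  have "(\<integral>\<^sup>+z. G (c * z) \<partial>lborel) = (\<integral>\<^sup>+z. G (S1 (S2 (S1 z))) \<partial>lborel)"
    by (simp add: shears)
  also have "\<dots> = (\<integral>\<^sup>+z. G (S1 (S2 z)) \<partial>lborel)"
    by (rule S1_shear[of "\<lambda>z. G (S1 (S2 z))"]) measurable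
  also have "\<dots> = (\<integral>\<^sup>+z. G (S1 z) \<partial>lborel)"
    by (rule S2_shear[of "\<lambda>z. G (S1 z)"]) measurable
  also have "\<dots> = (\<integral>\<^sup>+z. G z \<partial>lborel)"
    by (rule S1_shear) measurable
  finally show ?thesis .
qed

lemma nn_integral_lborel_complex_rotate:
  fixes G :: "complex \<Rightarrow> ennreal"
  assumes [measurable]: "G \<in> borel_measurable borel" and "cmod c = 1"
  shows "(\<integral>\<^sup>+z. G (c * z) \<partial>lborel) = (\<integral>\<^sup>+z. G z \<partial>lborel)"
proof -
  define s where "s = csqrt c"
  have "cmod s = 1"
    using assms(2) by (simp add: s_def)
  moreover have "s \<noteq> -1"
    using Re_csqrt[of c] by (auto simp flip: s_def)
  moreover have "c = s * s"
    unfolding s_def power2_eq_square[symmetric] by simp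
  ultimately have "(\<integral>\<^sup>+z. G (c * z) \<partial>lborel) = (\<integral>\<^sup>+z. G (s * (s * z)) \<partial>lborel)"
    by (simp add: mult.assoc)
  also have "\<dots> = (\<integral>\<^sup>+z. G (s * z) \<partial>lborel)"
    using \<open>cmod s = 1\<close> \<open>s \<noteq> -1\<close>
    by (intro nn_integral_lborel_complex_rotate_by_shears[of "\<lambda>z. G (s * z)"]) measurable
  also have "\<dots> = (\<integral>\<^sup>+z. G z \<partial>lborel)"
    using \<open>cmod s = 1\<close> \<open>s \<noteq> -1\<close> by (intro nn_integral_lborel_complex_rotate_by_shears) measurable
  finally show ?thesis .
qed

lemma nn_integral_lborel_complex_affine:
  fixes G :: "complex \<Rightarrow> ennreal"
  assumes [measurable]: "G \<in> borel_measurable borel" and "cmod a = 1"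
  shows "(\<integral>\<^sup>+z. G (a * z + b) \<partial>lborel) = (\<integral>\<^sup>+z. G z \<partial>lborel)"
proof -
  have "(\<integral>\<^sup>+z. G (a * z + b) \<partial>lborel) = (\<integral>\<^sup>+z. G (z + b) \<partial>lborel)"
    using assms(2) by (intro nn_integral_lborel_complex_rotate[where G = "\<lambda>z. G (z + b)"]) measurable
  also have "\<dots> = (\<integral>\<^sup>+z. G z \<partial>lborel)"
    using nn_integral_distr[of "(+) b" lborel borel G] lborel_distr_plus[of b]
    by (simp add: add.commute)
  finally show ?thesis .
qed

section \<open>Norms in the Fock space and bounded multipliers\<close>

lemma fock_integral_altdef:
  "fock_integral \<nu> F = (\<integral>\<^sup>+z. ennreal ((cmod (F z) * exp (- (cmod z)\<^sup>2 / 2)) powr \<nu>) \<partial>lborel)"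
  unfolding fock_integral_def
  by (intro nn_integral_cong) (simp add: powr_mult exp_powr_real mult.commute)

lemma nn_integral_gaussian_finite:
  assumes "\<nu> > 0"
  shows "(\<integral>\<^sup>+x. ennreal (exp (- \<nu> * x\<^sup>2 / 2)) \<partial>lborel) < \<infinity>"
proof -
  let ?f = "\<lambda>x::real. ennreal (exp (- x\<^sup>2 / 2))"
  have "(\<integral>\<^sup>+x. ?f x \<partial>lborel) = (\<integral>\<^sup>+x. ennreal (sqrt (2 * pi)) * ennreal (std_normal_density x) \<partial>lborel)"
    by (intro nn_integral_cong) (simp add: std_normal_density_def flip: ennreal_mult)
  also have "\<dots> = ennreal (sqrt (2 * pi))"
    by (simp add: nn_integral_cmult nn_integral_eq_integral normal_density_nonneg)
  finally have "(\<integral>\<^sup>+x. ?f x \<partial>lborel) < \<infinity>"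
    by simp
  moreover have "(\<integral>\<^sup>+x. ?f x \<partial>lborel)
      = ennreal (sqrt \<nu>) * (\<integral>\<^sup>+x. ennreal (exp (- \<nu> * x\<^sup>2 / 2)) \<partial>lborel)"
    using nn_integral_real_affine[of ?f "sqrt \<nu>" 0] assms by (simp add: power_mult_distrib)
  ultimately show ?thesis
    using assms by (auto simp: ennreal_mult_less_top)
qed

lemma nn_integral_complex_gaussian_finite:
  assumes "\<nu> > 0"
  shows "(\<integral>\<^sup>+z. ennreal (exp (- \<nu> * (cmod z)\<^sup>2 / 2)) \<partial>lborel) < \<infinity>"
proof -
  let ?g = "\<lambda>x::real. ennreal (exp (- \<nu> * x\<^sup>2 / 2))"
  have "(\<integral>\<^sup>+z. ennreal (exp (- \<nu> * (cmod z)\<^sup>2 / 2)) \<partial>lborel) = (\<integral>\<^sup>+x. \<integral>\<^sup>+y. ?g x * ?g y \<partial>lborel \<partial>lborel)"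
    by (subst nn_integral_lborel_complex(2), measurable)
       (simp add: cmod_power2 ring_distribs diff_divide_distrib flip: exp_add ennreal_mult)
  also have "\<dots> = (\<integral>\<^sup>+x. ?g x \<partial>lborel) * (\<integral>\<^sup>+y. ?g y \<partial>lborel)"
    by (simp add: nn_integral_cmult nn_integral_multc)
  also have "\<dots> < \<infinity>"
    using nn_integral_gaussian_finite[OF assms] by (simp add: ennreal_mult_less_top)
  finally show ?thesis .
qed

lemma fock_norm_nonneg: "0 \<le> fock_norm \<nu> F"
  by (simp add: fock_norm_def)

lemma fock_integral_mono:
  assumes "0 \<le> \<nu>" and "\<And>z. cmod (F z) \<le> cmod (G z)"
  shows "fock_integral \<nu> F \<le> fock_integral \<nu> G"
  unfolding fock_integral_def
  using assms by (intro nn_integral_mono ennreal_leI mult_right_mono powr_mono2) auto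

lemma fock_norm_mono:
  assumes "0 < \<nu>" and "fock_integral \<nu> G < \<infinity>" and "\<And>z. cmod (F z) \<le> cmod (G z)"
  shows "fock_norm \<nu> F \<le> fock_norm \<nu> G"
proof -
  have "enn2real (fock_integral \<nu> F) \<le> enn2real (fock_integral \<nu> G)"
    using assms by (intro enn2real_mono fock_integral_mono) auto
  then show ?thesis
    unfolding fock_norm_def using assms(1) by (intro powr_mono2 mult_left_mono) auto
qed

lemma one_in_fock_space:
  assumes "0 < \<nu>"
  shows "(\<lambda>_. 1) \<in> fock_space \<nu>"
  using nn_integral_complex_gaussian_finite[OF assms]
  by (simp add: fock_space_def fock_integral_def)

lemma fock_integral_cmult:
  assumes "F \<in> borel_measurable borel"
  shows "fock_integral \<nu> (\<lambda>z. k * F z) = ennreal (cmod k powr \<nu>) * fock_integral \<nu> F"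
  unfolding fock_integral_def using assms
  by (subst nn_integral_cmult[symmetric], measurable)
     (intro nn_integral_cong, simp add: norm_mult powr_mult mult.assoc flip: ennreal_mult)

lemma fock_norm_cmult:
  assumes "0 < \<nu>" and "F \<in> borel_measurable borel"
  shows "fock_norm \<nu> (\<lambda>z. k * F z) = cmod k * fock_norm \<nu> F"
proof -
  have "fock_norm \<nu> (\<lambda>z. k * F z)
      = (cmod k powr \<nu> * (\<nu> / (2 * pi) * enn2real (fock_integral \<nu> F))) powr (1 / \<nu>)"
    unfolding fock_norm_def fock_integral_cmult[OF assms(2)] by (simp add: enn2real_mult ac_simps)
  also have "\<dots> = (cmod k powr \<nu>) powr (1 / \<nu>) * fock_norm \<nu> F"
    unfolding fock_norm_def by (rule powr_mult)
  also have "\<dots> = cmod k * fock_norm \<nu> F"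
    using assms(1) by (simp add: powr_powr)
  finally show ?thesis .
qed

text \<open>Since \<^const>\<open>fock_norm\<close> is defined for all functions, indicators of balls can serve
  as non-holomorphic comparison functions.\<close>

lemma fock_norm_indicator_ball_pos:
  assumes "0 < \<nu>" and "0 < r"
  shows "0 < fock_norm \<nu> (indicator (ball u0 r))"
proof -
  let ?\<chi> = "indicator (ball u0 r) :: complex \<Rightarrow> complex"
  have [measurable]: "ball u0 r \<in> sets borel"
    by simp
  have "fock_integral \<nu> ?\<chi> \<le> fock_integral \<nu> (\<lambda>_. 1)"
    using assms(1) by (intro fock_integral_mono) (auto simp: indicator_def)
  then have "fock_integral \<nu> ?\<chi> < \<infinity>"
    using one_in_fock_space[OF assms(1)] by (auto simp: fock_space_def)
  moreover have "fock_integral \<nu> ?\<chi> \<noteq> 0"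
  proof
    assume "fock_integral \<nu> ?\<chi> = 0"
    then have "AE z in lborel. ennreal (cmod (?\<chi> z) powr \<nu> * exp (- \<nu> * (cmod z)\<^sup>2 / 2)) = 0"
      unfolding fock_integral_def by (subst (asm) nn_integral_0_iff_AE) (unfold measurable_lborel2, measurable)
    then have "emeasure lborel (ball u0 r) = 0"
      by (subst (asm) AE_iff_measurable[where N = "ball u0 r"]) (auto simp: indicator_def)
    moreover have "0 < measure lborel (ball u0 r)"
      using assms(2) by simp
    ultimately show False
      by (simp add: measure_def)
  qed
  ultimately show ?thesis
    unfolding fock_norm_def using assms(1)
    by (simp add: enn2real_eq_0_iff)
qed

lemma fock_norm_one_pos:
  assumes "0 < \<nu>"
  shows "0 < fock_norm \<nu> (\<lambda>_. 1)"
proof -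
  have "0 < fock_norm \<nu> (indicator (ball 0 1))"
    using assms by (rule fock_norm_indicator_ball_pos) simp
  also have "\<dots> \<le> fock_norm \<nu> (\<lambda>_. 1)"
    using assms one_in_fock_space[OF assms]
    by (intro fock_norm_mono) (auto simp: fock_space_def indicator_def)
  finally show ?thesis .
qed

lemma le_if_powers_dominated:
  fixes m M \<delta> K :: real
  assumes "0 < \<delta>" and "0 \<le> M" and "\<And>n. m ^ n * \<delta> \<le> M ^ n * K"
  shows "m \<le> M"
proof (rule ccontr)
  assume "\<not> m \<le> M"
  then have "0 < m" and "M / m < 1"
    using assms(2) by auto
  then have "(\<lambda>n. (M / m) ^ n * K) \<longlonglongrightarrow> 0 * K"
    using assms(2) by (intro tendsto_mult LIMSEQ_power_zero tendsto_const) auto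
  moreover have "\<delta> \<le> (M / m) ^ n * K" for n
    using assms(3)[of n] \<open>0 < m\<close> by (simp add: power_divide field_simps)
  ultimately have "\<delta> \<le> 0 * K"
    by (intro LIMSEQ_le_const) auto
  with assms(1) show False
    by simp
qed

lemma norm_le_if_fock_norm_powers_le:
  assumes "0 < \<nu>" and "continuous_on UNIV h" and "0 \<le> M"
    and "\<And>n. fock_integral \<nu> (\<lambda>z. h z ^ n) < \<infinity>"
    and "\<And>n. fock_norm \<nu> (\<lambda>z. h z ^ n) \<le> M ^ n * K"
  shows "cmod (h u) \<le> M"
proof (rule ccontr)
  assume "\<not> cmod (h u) \<le> M"
  define m where "m = (cmod (h u) + M) / 2"
  have "M < m" "m < cmod (h u)"
    using \<open>\<not> cmod (h u) \<le> M\<close> by (simp_all add: m_def)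
  have "open {z. m < cmod (h z)}"
    using assms(2) by (intro open_Collect_less continuous_intros)
  then obtain r where "0 < r" and r: "ball u r \<subseteq> {z. m < cmod (h z)}"
    using \<open>m < cmod (h u)\<close> by (auto elim: openE)
  have "0 \<le> m"
    using assms(3) \<open>M < m\<close> by simp
  have "m ^ n * fock_norm \<nu> (indicator (ball u r)) \<le> M ^ n * K" for n
  proof -
    have "m ^ n * fock_norm \<nu> (indicator (ball u r))
        = fock_norm \<nu> (\<lambda>z. of_real (m ^ n) * indicator (ball u r) z)"
      using fock_norm_cmult[OF assms(1), of "indicator (ball u r)" "of_real (m ^ n)"] \<open>0 \<le> m\<close>
      by (simp add: norm_power borel_measurable_indicator)
    also have "\<dots> \<le> fock_norm \<nu> (\<lambda>z. h z ^ n)"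
    proof (intro fock_norm_mono assms(1,4))
      fix z
      show "cmod (of_real (m ^ n) * indicator (ball u r) z) \<le> cmod (h z ^ n)"
      proof (cases "z \<in> ball u r")
        case True
        then have "m \<le> cmod (h z)"
          using r by auto
        with True \<open>0 \<le> m\<close> show ?thesis
          by (simp add: norm_power power_mono)
      qed simp
    qed
    also have "\<dots> \<le> M ^ n * K"
      by (rule assms(5))
    finally show ?thesis .
  qed
  then have "m \<le> M"
    by (rule le_if_powers_dominated[OF fock_norm_indicator_ball_pos[OF assms(1) \<open>0 < r\<close>] assms(3)])
  with \<open>M < m\<close> show False
    by simp
qed

lemma bounded_multiplier_if_bounded_on_fock:
  assumes "0 < \<nu>" and "bounded_on_fock \<nu> T" and "h holomorphic_on UNIV"
    and "\<And>F. F \<in> fock_space \<nu> \<Longrightarrow> fock_integral \<nu> (T F) = fock_integral \<nu> (\<lambda>z. h z * F z)"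
  shows "bounded (range h)"
proof -
  obtain C where T_closed: "\<forall>F \<in> fock_space \<nu>. T F \<in> fock_space \<nu>"
    and T_bound: "\<forall>F \<in> fock_space \<nu>. fock_norm \<nu> (T F) \<le> C * fock_norm \<nu> F"
    using assms(2) unfolding bounded_on_fock_def by blast
  have powers: "(\<lambda>z. h z ^ n) \<in> fock_space \<nu> \<and>
      fock_norm \<nu> (\<lambda>z. h z ^ n) \<le> \<bar>C\<bar> ^ n * fock_norm \<nu> (\<lambda>_. 1)" for n
  proof (induction n)
    case 0
    show ?case
      using one_in_fock_space[OF assms(1)] by simp
  next
    case (Suc n)
    then have hn: "(\<lambda>z. h z ^ n) \<in> fock_space \<nu>"
      by blast
    have same: "fock_integral \<nu> (\<lambda>z. h z ^ Suc n) = fock_integral \<nu> (T (\<lambda>z. h z ^ n))"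
      using assms(4)[OF hn] by simp
    have "fock_integral \<nu> (\<lambda>z. h z ^ Suc n) < \<infinity>"
      using T_closed hn unfolding same by (simp add: fock_space_def)
    then have mem: "(\<lambda>z. h z ^ Suc n) \<in> fock_space \<nu>"
      using assms(3) by (simp add: fock_space_def holomorphic_intros)
    have "fock_norm \<nu> (\<lambda>z. h z ^ Suc n) = fock_norm \<nu> (T (\<lambda>z. h z ^ n))"
      unfolding fock_norm_def same ..
    also have "\<dots> \<le> C * fock_norm \<nu> (\<lambda>z. h z ^ n)"
      using T_bound hn by blast
    also have "\<dots> \<le> \<bar>C\<bar> * fock_norm \<nu> (\<lambda>z. h z ^ n)"
      by (intro mult_right_mono fock_norm_nonneg) simp
    also have "\<dots> \<le> \<bar>C\<bar> ^ Suc n * fock_norm \<nu> (\<lambda>_. 1)"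
      using Suc.IH by (simp add: mult_left_mono mult.assoc)
    finally show ?case
      using mem by blast
  qed
  have "cmod (h u) \<le> \<bar>C\<bar>" for u
  proof (rule norm_le_if_fock_norm_powers_le[OF assms(1), where h = h and K = "fock_norm \<nu> (\<lambda>_. 1)"])
    show "continuous_on UNIV h"
      using assms(3) by (rule holomorphic_on_imp_continuous_on)
    show "fock_integral \<nu> (\<lambda>z. h z ^ n) < \<infinity>" for n
      using powers[of n] unfolding fock_space_def by blast
    show "fock_norm \<nu> (\<lambda>z. h z ^ n) \<le> \<bar>C\<bar> ^ n * fock_norm \<nu> (\<lambda>_. 1)" for n
      using powers[of n] by blast
  qed simp
  then show ?thesis
    by (intro boundedI[where B = "\<bar>C\<bar>"]) auto
qed

section \<open>Weighted composition operators with a rotation-translation symbol\<close>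

lemma borel_measurable_holomorphic_on_UNIV:
  "f holomorphic_on UNIV \<Longrightarrow> f \<in> borel_measurable borel"
  by (intro borel_measurable_continuous_onI holomorphic_on_imp_continuous_on)

definition wcomp_affine_multiplier ::
    "(complex \<Rightarrow> complex) \<Rightarrow> complex \<Rightarrow> complex \<Rightarrow> complex \<Rightarrow> complex"
  where "wcomp_affine_multiplier w a b u = w (cnj a * (u - b)) * exp (cnj b * u - of_real ((cmod b)\<^sup>2 / 2))"

lemma norm_affine_square:
  assumes "cmod a = 1"
  shows "(cmod (a * z + b))\<^sup>2 = (cmod z)\<^sup>2 + 2 * Re (cnj b * (a * z)) + (cmod b)\<^sup>2"
proof -
  have "(Re a * Re z - Im a * Im z)\<^sup>2 + (Re a * Im z + Im a * Re z)\<^sup>2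
      = ((Re a)\<^sup>2 + (Im a)\<^sup>2) * ((Re z)\<^sup>2 + (Im z)\<^sup>2)"
    by (simp add: power2_eq_square algebra_simps)
  also have "(Re a)\<^sup>2 + (Im a)\<^sup>2 = 1"
    using assms by (simp add: cmod_def)
  finally show ?thesis
    unfolding cmod_power2 by (simp add: power2_eq_square algebra_simps)
qed

lemma fock_integral_wcomp_affine:
  assumes "cmod a = 1"
    and [measurable]: "w \<in> borel_measurable borel" "F \<in> borel_measurable borel"
  shows "fock_integral \<nu> (wcomp w (\<lambda>z. a * z + b) F)
       = fock_integral \<nu> (\<lambda>u. wcomp_affine_multiplier w a b u * F u)"
proof -
  let ?h = "wcomp_affine_multiplier w a b"
  define G where "G u = ennreal ((cmod (?h u * F u) * exp (- (cmod u)\<^sup>2 / 2)) powr \<nu>)" for u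
  have [measurable]: "G \<in> borel_measurable borel"
    unfolding G_def[abs_def] wcomp_affine_multiplier_def by measurable
  have "cnj a * a = 1"
    using assms(1) by (metis complex_norm_square mult.commute of_real_1 power_one)
  then have h_affine: "?h (a * z + b) = w z * exp (cnj b * (a * z + b) - of_real ((cmod b)\<^sup>2 / 2))" for z
    by (simp add: wcomp_affine_multiplier_def mult.assoc[symmetric])
  have "Re (cnj b * b) = (cmod b)\<^sup>2"
    by (metis Re_complex_of_real complex_norm_square mult.commute of_real_power)
  then have "Re (cnj b * (a * z + b) - of_real ((cmod b)\<^sup>2 / 2)) - (cmod (a * z + b))\<^sup>2 / 2
      = - (cmod z)\<^sup>2 / 2" for z
    using norm_affine_square[OF assms(1), of z b] by (simp add: distrib_left field_simps)
  then have weight: "cmod (?h (a * z + b)) * exp (- (cmod (a * z + b))\<^sup>2 / 2)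
      = cmod (w z) * exp (- (cmod z)\<^sup>2 / 2)" for z
    unfolding h_affine by (simp add: norm_mult norm_exp_eq_Re mult.assoc flip: exp_add)
  have G_affine: "G (a * z + b)
      = ennreal ((cmod (wcomp w (\<lambda>z. a * z + b) F z) * exp (- (cmod z)\<^sup>2 / 2)) powr \<nu>)" for z
  proof -
    have "cmod (?h (a * z + b) * F (a * z + b)) * exp (- (cmod (a * z + b))\<^sup>2 / 2)
        = cmod (F (a * z + b)) * (cmod (?h (a * z + b)) * exp (- (cmod (a * z + b))\<^sup>2 / 2))"
      by (simp add: norm_mult)
    also have "\<dots> = cmod (wcomp w (\<lambda>z. a * z + b) F z) * exp (- (cmod z)\<^sup>2 / 2)"
      unfolding weight by (simp add: wcomp_def norm_mult)
    finally show ?thesis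
      by (simp add: G_def)
  qed
  have "fock_integral \<nu> (wcomp w (\<lambda>z. a * z + b) F) = (\<integral>\<^sup>+z. G (a * z + b) \<partial>lborel)"
    unfolding fock_integral_altdef G_affine ..
  also have "\<dots> = (\<integral>\<^sup>+z. G z \<partial>lborel)"
    using assms(1) by (intro nn_integral_lborel_complex_affine) measurable
  also have "\<dots> = fock_integral \<nu> (\<lambda>u. ?h u * F u)"
    unfolding fock_integral_altdef G_def ..
  finally show ?thesis .
qed

lemma wcomp_affine_multiplier_holomorphic:
  assumes "w holomorphic_on UNIV"
  shows "wcomp_affine_multiplier w a b holomorphic_on UNIV"
proof -
  have "(w \<circ> (\<lambda>u. cnj a * (u - b))) holomorphic_on UNIV"
    using assms by (intro holomorphic_on_compose holomorphic_intros) (auto intro: holomorphic_on_subset)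
  then show ?thesis
    unfolding wcomp_affine_multiplier_def[abs_def] by (auto simp: o_def intro!: holomorphic_intros)
qed

lemma wcomp_affine_multiplier_const:
  assumes "0 < \<nu>" and "cmod a = 1" and "w holomorphic_on UNIV"
    and "bounded_on_fock \<nu> (wcomp w (\<lambda>z. a * z + b))"
  shows "wcomp_affine_multiplier w a b u = w 0 * exp (of_real ((cmod b)\<^sup>2 / 2))"
proof -
  let ?h = "wcomp_affine_multiplier w a b"
  have h_holo: "?h holomorphic_on UNIV"
    using assms(3) by (rule wcomp_affine_multiplier_holomorphic)
  have "bounded (range ?h)"
  proof (rule bounded_multiplier_if_bounded_on_fock[OF assms(1,4) h_holo])
    fix F
    assume "F \<in> fock_space \<nu>"
    then show "fock_integral \<nu> (wcomp w (\<lambda>z. a * z + b) F) = fock_integral \<nu> (\<lambda>z. ?h z * F z)"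
      using assms(2,3) by (intro fock_integral_wcomp_affine borel_measurable_holomorphic_on_UNIV)
        (auto simp: fock_space_def)
  qed
  then have "?h u = ?h b"
    using Liouville_theorem[OF h_holo] by (auto simp: constant_on_def)
  also have "?h b = w 0 * exp (of_real ((cmod b)\<^sup>2 / 2))"
  proof -
    have "cnj b * b = of_real ((cmod b)\<^sup>2)"
      by (metis complex_norm_square mult.commute of_real_power)
    then show ?thesis
      by (simp add: wcomp_affine_multiplier_def flip: of_real_diff)
  qed
  finally show ?thesis .
qed

lemma fock_norm_wcomp_affine:
  assumes "0 < \<nu>" and "cmod a = 1" and "w holomorphic_on UNIV"
    and "bounded_on_fock \<nu> (wcomp w (\<lambda>z. a * z + b))" and "F \<in> fock_space \<nu>"
  shows "fock_norm \<nu> (wcomp w (\<lambda>z. a * z + b) F) = cmod (w 0) * exp ((cmod b)\<^sup>2 / 2) * fock_norm \<nu> F"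
proof -
  have measurable: "w \<in> borel_measurable borel" "F \<in> borel_measurable borel"
    using assms(3,5) by (auto simp: fock_space_def intro: borel_measurable_holomorphic_on_UNIV)
  have "fock_norm \<nu> (wcomp w (\<lambda>z. a * z + b) F)
      = fock_norm \<nu> (\<lambda>u. wcomp_affine_multiplier w a b u * F u)"
    unfolding fock_norm_def fock_integral_wcomp_affine[OF assms(2) measurable] ..
  also have "\<dots> = fock_norm \<nu> (\<lambda>u. (w 0 * exp (of_real ((cmod b)\<^sup>2 / 2))) * F u)"
    using wcomp_affine_multiplier_const[OF assms(1-4)] by simp
  also have "\<dots> = cmod (w 0) * exp ((cmod b)\<^sup>2 / 2) * fock_norm \<nu> F"
    using assms(1) measurable(2) by (simp add: fock_norm_cmult norm_mult)
  finally show ?thesis .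
qed

lemma power_bounded_on_fock_iff_le_one:
  assumes "\<And>F. F \<in> fock_space \<nu> \<Longrightarrow> T F \<in> fock_space \<nu>"
    and "\<And>F. F \<in> fock_space \<nu> \<Longrightarrow> fock_norm \<nu> (T F) = c * fock_norm \<nu> F"
    and "0 \<le> c" and "f \<in> fock_space \<nu>" and "0 < fock_norm \<nu> f"
  shows "power_bounded_on_fock \<nu> T \<longleftrightarrow> c \<le> 1"
proof -
  have iterates: "(T ^^ n) F \<in> fock_space \<nu> \<and> fock_norm \<nu> ((T ^^ n) F) = c ^ n * fock_norm \<nu> F"
    if "F \<in> fock_space \<nu>" for n F
    using that by (induction n) (simp_all add: assms(1,2))
  show ?thesis
  proof
    assume "power_bounded_on_fock \<nu> T"
    then obtain C where C: "\<forall>n \<ge> 1. \<forall>F \<in> fock_space \<nu>. fock_norm \<nu> ((T ^^ n) F) \<le> C * fock_norm \<nu> F"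
      unfolding power_bounded_on_fock_def by blast
    have bounded_powers: "c ^ n \<le> C" if "n \<ge> 1" for n
    proof -
      have "c ^ n * fock_norm \<nu> f \<le> C * fock_norm \<nu> f"
        using C[rule_format, OF that assms(4)] iterates[OF assms(4), of n] by simp
      with assms(5) show ?thesis
        by simp
    qed
    show "c \<le> 1"
    proof (rule ccontr)
      assume "\<not> c \<le> 1"
      then obtain n where "C < c ^ n"
        using real_arch_pow[of c C] by auto
      also have "\<dots> \<le> c ^ Suc n"
        using \<open>\<not> c \<le> 1\<close> by (intro power_increasing) auto
      finally show False
        using bounded_powers[of "Suc n"] by simp
    qed
  next
    assume "c \<le> 1"
    then have "fock_norm \<nu> ((T ^^ n) F) \<le> 1 * fock_norm \<nu> F" if "F \<in> fock_space \<nu>" for n F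
      using iterates[OF that, of n] assms(3) fock_norm_nonneg[of \<nu> F]
      by (simp add: mult_left_le_one_le power_le_one)
    then show "power_bounded_on_fock \<nu> T"
      unfolding power_bounded_on_fock_def by blast
  qed
qed

theorem theorem3p1:
  fixes \<nu> :: real and a b :: complex and w :: "complex \<Rightarrow> complex"
  assumes "1 \<le> \<nu>"
    and "cmod a = 1"
    and "w holomorphic_on UNIV"
    and "bounded_on_fock \<nu> (wcomp w (\<lambda>z. a * z + b))"
  shows "power_bounded_on_fock \<nu> (wcomp w (\<lambda>z. a * z + b)) \<longleftrightarrow>
         cmod (w 0) \<le> exp (- (cmod b)\<^sup>2 / 2)"
proof -
  have "0 < \<nu>"
    using assms(1) by simp
  have closed: "wcomp w (\<lambda>z. a * z + b) F \<in> fock_space \<nu>" if "F \<in> fock_space \<nu>" for F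
    using assms(4) that unfolding bounded_on_fock_def by blast
  have "power_bounded_on_fock \<nu> (wcomp w (\<lambda>z. a * z + b)) \<longleftrightarrow> cmod (w 0) * exp ((cmod b)\<^sup>2 / 2) \<le> 1"
    by (rule power_bounded_on_fock_iff_le_one[OF closed fock_norm_wcomp_affine[OF \<open>0 < \<nu>\<close> assms(2-4)]
          _ one_in_fock_space[OF \<open>0 < \<nu>\<close>] fock_norm_one_pos[OF \<open>0 < \<nu>\<close>]]) auto
  also have "\<dots> \<longleftrightarrow> cmod (w 0) \<le> exp (- (cmod b)\<^sup>2 / 2)"
    by (simp add: exp_minus field_simps)
  finally show ?thesis .
qed

end
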